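(* Fix an integer $n\ge 1$. For an integer $k$ with $-n\le k\le n$ put $r_{\min}^{(k)}=\left\lceil \frac{n+k}{2}\right\rceil$ and $r_{\max}^{(k)}=\min(n,n+k)$, and for $r_{\min}^{(k)}\le r\le r_{\max}^{(k)}$ define $$Q_{k,r}=\sum_{i=k+n-r}^{r}(-1)^i\binom{i-k+1}{n-r+1}\binom{n-i}{n-r}\,u_i\,u_{n+k-i}.$$ Then $Q_{k,r}$ is a nonzero element of $\mathcal Q_k$ of order $r$ (it involves $u_r$ but no $u_j$ with $j>r$), and it has deficiency $$m(k,r)=k+2\left(r-r_{\min}^{(k)}\right)$$ relative to $\mathcal P_n$, i.e. $Q_{k,r}(\mathcal P_n)\subset\mathcal P_{n-m(k,r)}$ but $Q_{k,r}(\mathcal P_n)\not\subset\mathcal P_{n-m(k,r)-1}$. Moreover $\{Q_{k,r}: r_{\min}^{(k)}\le r\le r_{\max}^{(k)}\}$ is a basis of $\mathcal Q_k$.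
   Context: Non-linear operators are identified with polynomial functions of jet variables: an element $P(x,u_0,\dots,u_n)\in\mathbb R[x,u_0,\dots,u_n]$ acts on a smooth function $f$ of one real variable by $P[f](x)=P(x,f(x),f'(x),\dots,f^{(n)}(x))$. For $s\ge 0$, $\mathcal P_s$ is the space of real polynomials in $x$ of degree at most $s$, and $\mathcal P_s=\{0\}$ for $s<0$. An operator $T$ has deficiency $m\in\mathbb Z$ relative to $\mathcal P_n$ if $T(\mathcal P_n)\subset\mathcal P_{n-m}$ but $T(\mathcal P_n)\not\subset\mathcal P_{n-m-1}$. For $-n\le k\le n$, $\mathcal Q_k$ is the real span of the monomials $u_iu_j$ with $i+j=n+k$, $0\le i,j\le n$ (the quadratic autonomous operators of "monomial deficiency" $k$). Binomial coefficients are $\binom{a}{i}=a(a-1)\cdots(a-i+1)/i!$ for $i\ge0$ and $0$ for $i<0$. *)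

theory Defs
  imports "HOL-Analysis.Analysis" "HOL-Computational_Algebra.Polynomial" "HOL-Library.Function_Algebras"
begin

text \<open>A (non-linear, autonomous) operator is identified with the function it induces on jet
  values: u (a function nat to real) stands for the jet variables u_0, u_1, ...
  (only u_0..u_n are ever used). Real polynomials are determined by their values, so this
  identification is faithful for the quadratic polynomials considered here.\<close>
type_synonym jetop = "(nat \<Rightarrow> real) \<Rightarrow> real"

definition act :: "jetop \<Rightarrow> (real \<Rightarrow> real) \<Rightarrow> real \<Rightarrow> real" where
  "act T f = (\<lambda>x. T (\<lambda>i. (deriv ^^ i) f x))"

definition inP :: "int \<Rightarrow> (real \<Rightarrow> real) \<Rightarrow> bool" where
  "inP s g \<longleftrightarrow> (\<exists>q :: real poly. g = poly q \<and> (if s < 0 then q = 0 else int (degree q) \<le> s))"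

definition has_deficiency :: "nat \<Rightarrow> jetop \<Rightarrow> int \<Rightarrow> bool" where
  "has_deficiency n T m \<longleftrightarrow>
     (\<forall>p :: real poly. degree p \<le> n \<longrightarrow> inP (int n - m) (act T (poly p))) \<and>
     \<not> (\<forall>p :: real poly. degree p \<le> n \<longrightarrow> inP (int n - m - 1) (act T (poly p)))"

definition involves :: "jetop \<Rightarrow> nat \<Rightarrow> bool" where
  "involves T j \<longleftrightarrow> (\<exists>u c. T (u(j := c)) \<noteq> T u)"

definition opscale :: "real \<Rightarrow> jetop \<Rightarrow> jetop" where
  "opscale c T = (\<lambda>u. c * T u)"

abbreviation opspan :: "jetop set \<Rightarrow> jetop set" where
  "opspan \<equiv> module.span opscale"

abbreviation opdependent :: "jetop set \<Rightarrow> bool" where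
  "opdependent \<equiv> module.dependent opscale"

definition Qspace :: "nat \<Rightarrow> int \<Rightarrow> jetop set" where
  "Qspace n k = opspan {(\<lambda>u. u i * u j) | i j. i \<le> n \<and> j \<le> n \<and> int i + int j = int n + k}"

definition rmin :: "nat \<Rightarrow> int \<Rightarrow> int" where
  "rmin n k = \<lceil>real_of_int (int n + k) / 2\<rceil>"

definition rmax :: "nat \<Rightarrow> int \<Rightarrow> int" where
  "rmax n k = min (int n) (int n + k)"

definition Qkr :: "nat \<Rightarrow> int \<Rightarrow> int \<Rightarrow> jetop" where
  "Qkr n k r = (\<lambda>u. \<Sum>i\<in>{k + int n - r .. r}.
      (-1) powi i * ((of_int (i - k + 1) :: real) gchoose nat (int n - r + 1))
        * ((of_int (int n - i) :: real) gchoose nat (int n - r))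
        * u (nat i) * u (nat (int n + k - i)))"

end

theory Submission
  imports Defs
begin

(* Write n = a + L + s, k = a - s and r = a + L. On a polynomial p, Q_{k,r} acts as
   sum_j W_j p^(j) p^(N-j) with N = n + k and weights W_j = (-1)^j P(j - a), where
   P(x) = C(x+s+1, s+1) C(L+s-x, s) has degree 2s+1. Differentiating such an expression replaces
   W_j by W_j + W_(j-1), which on the sign-twisted weights is a backward difference of P. After
   2s + 1 + (L mod 2) derivatives the weights are zero (L odd) or antisymmetric (L even), so the
   expression vanishes on P_n. On the monomial x^m with 2m = N + 2s + (L mod 2), the
   (2s + (L mod 2))-th derivative is a multiple of a single difference of P, which is nonzero:
   for odd L it is the leading difference, for even L the part of P antisymmetric about L/2
   contributes nothing. Hence the deficiency is n - 2s - (L mod 2) = k + 2 (r - r_min).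
   Q_{k,r} involves u_r but no u_j with j > r, so the family is triangular, hence independent,
   and it has as many members as there are monomials u_i u_(n+k-i) with i >= n+k-i. *)

section \<open>Backward differences\<close>

primrec bdiff :: "nat \<Rightarrow> (real \<Rightarrow> real) \<Rightarrow> real \<Rightarrow> real" where
  "bdiff 0 f x = f x"
| "bdiff (Suc e) f x = bdiff e f x - bdiff e f (x - 1)"

lemma bdiff_add: "bdiff e (\<lambda>y. f y + g y) x = bdiff e f x + bdiff e g x"
  by (induction e arbitrary: x) auto

lemma bdiff_diff: "bdiff e (\<lambda>y. f y - g y) x = bdiff e f x - bdiff e g x"
  by (induction e arbitrary: x) auto

lemma bdiff_cmult: "bdiff e (\<lambda>y. c * f y) x = c * bdiff e f x"
  by (induction e arbitrary: x) (auto simp: algebra_simps)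

lemma bdiff_shift: "bdiff e (\<lambda>y. f (y + c)) x = bdiff e f (x + c)"
  by (induction e arbitrary: x) (auto simp: algebra_simps)

lemma bdiff_reflect: "bdiff e (\<lambda>y. f (c - y)) x = (-1) ^ e * bdiff e f (c - x + real e)"
  by (induction e arbitrary: x) (auto simp: algebra_simps)

lemma bdiff_Suc': "bdiff (Suc e) f x = bdiff e (\<lambda>y. f y - f (y - 1)) x"
  using bdiff_shift[of e f "-1" x] by (simp add: bdiff_diff)

lemma bdiff_eq_self_if_zeros:
  assumes "\<And>q. 1 \<le> q \<Longrightarrow> q \<le> e \<Longrightarrow> f (x - real q) = 0"
  shows "bdiff e f x = f x"
  using assms
proof (induction e arbitrary: x)
  case (Suc e)
  have "bdiff e f (x - 1) = f (x - 1)"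
    using Suc.prems[of "Suc q" for q] by (intro Suc.IH) (auto simp: algebra_simps)
  moreover have "f (x - 1) = 0"
    using Suc.prems[of 1] by simp
  ultimately show ?case
    using Suc by simp
qed simp

lemma bdiff_even_order_antisymmetric:
  assumes "\<And>y. f (2 * c - y) = - f y"
  shows "bdiff (2 * m) f (c + real m) = 0"
proof -
  have "- bdiff (2 * m) f (c + real m) = bdiff (2 * m) (\<lambda>y. f (2 * c - y)) (c + real m)"
    using bdiff_cmult[of "2 * m" "-1" f] by (simp add: assms)
  also have "\<dots> = bdiff (2 * m) f (c + real m)"
    by (simp add: bdiff_reflect algebra_simps)
  finally show ?thesis by simp
qed

definition bdiff_poly :: "real poly \<Rightarrow> real poly" where
  "bdiff_poly p = p - p \<circ>\<^sub>p [:-1, 1:]"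

lemma poly_bdiff_poly: "poly (bdiff_poly p) y = poly p y - poly p (y - 1)"
  by (simp add: bdiff_poly_def poly_pcompose)

lemma coeff_bdiff_poly_eq_0:
  assumes "degree p \<le> e" and "e \<le> i"
  shows "coeff (bdiff_poly p) i = 0"
proof -
  have deg_comp: "degree (p \<circ>\<^sub>p [:-1, 1:]) = degree p"
    by (simp add: degree_pcompose)
  have "coeff (p \<circ>\<^sub>p [:-1, 1:]) (degree p) = lead_coeff p"
    using lead_coeff_comp[of "[:-1, 1::real:]" p] deg_comp by simp
  then have top: "coeff (bdiff_poly p) (degree p) = 0"
    by (simp add: bdiff_poly_def)
  have "degree (bdiff_poly p) \<le> degree p"
    unfolding bdiff_poly_def using degree_diff_le deg_comp by (metis order_refl)
  then show ?thesis
    using top assms by (cases "i = degree p") (auto intro: coeff_eq_0)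
qed

lemma bdiff_poly_eq_0:
  "(\<And>i. e \<le> i \<Longrightarrow> coeff p i = 0) \<Longrightarrow> bdiff e (poly p) x = 0"
proof (induction e arbitrary: p x)
  case 0
  then have "p = 0"
    by (intro poly_eqI) simp
  then show ?case by simp
next
  case (Suc e)
  have "bdiff (Suc e) (poly p) x = bdiff e (poly (bdiff_poly p)) x"
    by (simp only: bdiff_Suc' poly_bdiff_poly[symmetric])
  also have "\<dots> = 0"
    using Suc.prems by (intro Suc.IH coeff_bdiff_poly_eq_0 degree_le) auto
  finally show ?case .
qed

definition falling_poly :: "nat \<Rightarrow> real poly" where
  "falling_poly e = (\<Prod>i<e. [:- of_nat i, 1:])"

lemma poly_falling_poly: "poly (falling_poly e) x = (\<Prod>i<e. x - of_nat i)"
  by (simp add: falling_poly_def poly_prod)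

lemma degree_falling_poly: "degree (falling_poly e) = e"
  unfolding falling_poly_def by (subst degree_prod_sum_eq) auto

lemma lead_coeff_falling_poly: "coeff (falling_poly e) e = 1"
  using lead_coeff_prod[of "\<lambda>i. [:- of_nat i, 1::real:]" "{..<e}"] degree_falling_poly
  by (simp add: falling_poly_def)

lemma bdiff_falling_poly: "bdiff e (poly (falling_poly e)) (real e) = fact e"
proof -
  have "bdiff e (poly (falling_poly e)) (real e) = poly (falling_poly e) (real e)"
    unfolding poly_falling_poly
  proof (intro bdiff_eq_self_if_zeros prod_zero)
    fix q assume "1 \<le> q" "q \<le> e"
    then show "\<exists>i\<in>{..<e}. real e - real q - real i = 0"
      by (intro bexI[of _ "e - q"]) auto
  qed simp
  also have "\<dots> = (\<Prod>i<e. real (e - i))"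
    unfolding poly_falling_poly by (intro prod.cong) auto
  also have "\<dots> = fact e"
    by (simp add: fact_prod_rev prod.atLeast0_lessThan_Suc_shift atLeast0LessThan)
  finally show ?thesis .
qed

lemma bdiff_poly_degree_le:
  assumes "degree p \<le> e"
  shows "bdiff e (poly p) x = fact e * coeff p e"
proof -
  define g where "g = p \<circ>\<^sub>p [:x - real e, 1:]"
  have "poly g = (\<lambda>y. poly p (y + (x - real e)))"
    by (auto simp: g_def poly_pcompose algebra_simps)
  then have shift: "bdiff e (poly p) x = bdiff e (poly g) (real e)"
    using bdiff_shift[of e "poly p" "x - real e" "real e"] by simp
  have deg_g: "degree g = degree p"
    by (simp add: g_def degree_pcompose)
  have coeff_g: "coeff g e = coeff p e"
  proof (cases "degree p = e")
    case True
    then show ?thesis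
      using lead_coeff_comp[of "[:x - real e, 1:]" p] deg_g by (simp add: g_def)
  qed (use assms deg_g in \<open>simp add: coeff_eq_0\<close>)
  define h where "h = g - smult (coeff g e) (falling_poly e)"
  have "coeff h i = 0" if "e \<le> i" for i
    using that deg_g assms degree_falling_poly
    by (cases "i = e") (auto simp: h_def lead_coeff_falling_poly coeff_eq_0)
  then have "bdiff e (poly h) (real e) = 0"
    by (rule bdiff_poly_eq_0)
  moreover have "poly g = (\<lambda>y. coeff g e * poly (falling_poly e) y + poly h y)"
    by (simp add: h_def)
  ultimately show ?thesis
    by (simp add: shift coeff_g bdiff_add bdiff_cmult bdiff_falling_poly)
qed

section \<open>The weight polynomial\<close>

lemma gbinomial_of_nat_eq_0: "m < k \<Longrightarrow> (real m gchoose k) = 0"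
  using binomial_gbinomial[of m k, where 'a = real] by (simp add: binomial_eq_0)

definition gchoose_poly :: "nat \<Rightarrow> real poly" where
  "gchoose_poly k = smult (1 / fact k) (falling_poly k)"

lemma poly_gchoose_poly: "poly (gchoose_poly k) x = x gchoose k"
  by (simp add: gchoose_poly_def poly_falling_poly gbinomial_prod_rev atLeast0LessThan)

lemma gchoose_poly_pcompose_linear:
  assumes "c \<noteq> 0"
  shows "gchoose_poly k \<circ>\<^sub>p [:b, c:] \<noteq> 0" and "degree (gchoose_poly k \<circ>\<^sub>p [:b, c:]) = k"
proof -
  have "coeff (gchoose_poly k) k \<noteq> 0"
    by (simp add: gchoose_poly_def lead_coeff_falling_poly)
  then show "gchoose_poly k \<circ>\<^sub>p [:b, c:] \<noteq> 0"
    using assms by (auto simp: pcompose_eq_0_iff)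
  show "degree (gchoose_poly k \<circ>\<^sub>p [:b, c:]) = k"
    using assms by (simp add: degree_pcompose gchoose_poly_def degree_falling_poly)
qed

definition weight_poly :: "nat \<Rightarrow> nat \<Rightarrow> real poly" where
  "weight_poly s L =
     (gchoose_poly (Suc s) \<circ>\<^sub>p [:real s + 1, 1:]) * (gchoose_poly s \<circ>\<^sub>p [:real L + real s, -1:])"

definition sym_weight_poly :: "nat \<Rightarrow> nat \<Rightarrow> real poly" where
  "sym_weight_poly s L =
     (gchoose_poly s \<circ>\<^sub>p [:real s, 1:]) * (gchoose_poly s \<circ>\<^sub>p [:real L + real s, -1:])"

lemma poly_weight_poly:
  "poly (weight_poly s L) x = (x + real s + 1 gchoose Suc s) * (real L + real s - x gchoose s)"
  by (simp add: weight_poly_def poly_pcompose poly_gchoose_poly algebra_simps)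

lemma poly_sym_weight_poly:
  "poly (sym_weight_poly s L) x = (x + real s gchoose s) * (real L + real s - x gchoose s)"
  by (simp add: sym_weight_poly_def poly_pcompose poly_gchoose_poly algebra_simps)

lemma weight_poly_nonzero: "weight_poly s L \<noteq> 0"
  and degree_weight_poly: "degree (weight_poly s L) = Suc (2 * s)"
  using gchoose_poly_pcompose_linear[of 1 "Suc s" "real s + 1"]
    gchoose_poly_pcompose_linear[of "-1" s "real L + real s"]
  by (auto simp: weight_poly_def degree_mult_eq)

lemma sym_weight_poly_nonzero: "sym_weight_poly s L \<noteq> 0"
  and degree_sym_weight_poly: "degree (sym_weight_poly s L) = 2 * s"
  using gchoose_poly_pcompose_linear[of 1 s "real s"]
    gchoose_poly_pcompose_linear[of "-1" s "real L + real s"]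
  by (auto simp: sym_weight_poly_def degree_mult_eq)

lemma poly_weight_poly_eq_sym:
  "poly (weight_poly s L) x = (x + real s + 1) / (real s + 1) * poly (sym_weight_poly s L) x"
proof -
  have "(real s + 1) * (x + real s + 1 gchoose Suc s) = (x + real s + 1) * (x + real s gchoose s)"
    using gbinomial_absorption[of s "x + real s + 1"] by (simp add: add.commute)
  then have "(x + real s + 1 gchoose Suc s) = (x + real s + 1) / (real s + 1) * (x + real s gchoose s)"
    by (simp add: field_simps)
  then show ?thesis
    by (simp add: poly_weight_poly poly_sym_weight_poly)
qed

lemma bdiff_weight_poly_top:
  "bdiff (Suc (2 * s)) (poly (weight_poly s L)) x = fact (Suc (2 * s)) * lead_coeff (weight_poly s L)"
  by (simp add: bdiff_poly_degree_le degree_weight_poly del: bdiff.simps)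

lemma bdiff_weight_poly_above: "bdiff (Suc (Suc (2 * s))) (poly (weight_poly s L)) x = 0"
  using bdiff_poly_degree_le[of "weight_poly s L" "Suc (Suc (2 * s))" x]
  by (simp add: degree_weight_poly coeff_eq_0 del: bdiff.simps)

lemma bdiff_weight_poly_centre:
  assumes "even L"
  shows "bdiff (2 * s) (poly (weight_poly s L)) (real L / 2 + real s) \<noteq> 0"
proof -
  define c where "c = real L / 2"
  define f where "f y = (y - c) * poly (sym_weight_poly s L) y" for y
  have "f (2 * c - y) = - f y" for y
    by (simp add: f_def c_def poly_sym_weight_poly algebra_simps)
  then have f_centre: "bdiff (2 * s) f (c + real s) = 0"
    by (rule bdiff_even_order_antisymmetric)
  have "poly (weight_poly s L)
      = (\<lambda>y. (c + real s + 1) / (real s + 1) * poly (sym_weight_poly s L) y + 1 / (real s + 1) * f y)"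
    by (rule ext) (simp add: poly_weight_poly_eq_sym f_def add_divide_distrib ring_distribs)
  then have "bdiff (2 * s) (poly (weight_poly s L)) (c + real s)
      = (c + real s + 1) / (real s + 1) * bdiff (2 * s) (poly (sym_weight_poly s L)) (c + real s)"
    by (simp only: bdiff_add bdiff_cmult f_centre mult_zero_right add_0_right)
  also have "\<dots> = (c + real s + 1) / (real s + 1) * (fact (2 * s) * lead_coeff (sym_weight_poly s L))"
    by (simp add: bdiff_poly_degree_le degree_sym_weight_poly del: bdiff.simps)
  also have "\<dots> \<noteq> 0"
    using sym_weight_poly_nonzero by (simp add: c_def add_pos_nonneg)
  finally show ?thesis
    by (simp add: c_def)
qed

section \<open>Quadratic operators and their action on polynomials\<close>

lemma higher_deriv_poly: "(deriv ^^ i) (poly p) = poly ((pderiv ^^ i) p)" for p :: "real poly"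
proof (induction i)
  case (Suc i)
  have "deriv (poly q) = poly (pderiv q)" for q :: "real poly"
    by (rule ext) (rule DERIV_imp_deriv[OF poly_DERIV])
  then show ?case
    using Suc by simp
qed simp

lemma higher_pderiv_eq_0_iff:
  fixes p :: "real poly"
  shows "(pderiv ^^ j) p = 0 \<longleftrightarrow> p = 0 \<or> degree p < j"
proof
  assume "(pderiv ^^ j) p = 0"
  moreover have "coeff ((pderiv ^^ j) p) (degree p - j) \<noteq> 0" if "p \<noteq> 0" "j \<le> degree p"
    using that pochhammer_pos[of "real (Suc (degree p - j))" j]
    by (simp add: coeff_higher_pderiv)
  ultimately show "p = 0 \<or> degree p < j"
    by fastforce
next
  assume "p = 0 \<or> degree p < j"
  then show "(pderiv ^^ j) p = 0"
    by (auto intro!: poly_eqI simp: coeff_higher_pderiv coeff_eq_0)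
qed

lemma inP_poly: "inP d (poly R) \<longleftrightarrow> (if d < 0 then R = 0 else int (degree R) \<le> d)"
  unfolding inP_def by (auto simp: poly_eq_poly_eq_iff)

lemma has_deficiencyI:
  assumes "\<And>p. act T (poly p) = poly (F p)"
    and "\<And>p. degree p \<le> n \<Longrightarrow> degree (F p) \<le> d"
    and "degree p0 \<le> n" and "F p0 \<noteq> 0" and "d \<le> degree (F p0)"
  shows "has_deficiency n T (int n - int d)"
  using assms by (fastforce simp: has_deficiency_def inP_poly)

(* Weights are indexed by integers so that the shifted weights W (i - 1) never need truncating. *)
definition quad_jet :: "(int \<Rightarrow> real) \<Rightarrow> nat \<Rightarrow> jetop" where
  "quad_jet W M = (\<lambda>u. \<Sum>j\<le>M. W (int j) * u j * u (M - j))"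

definition quad_poly :: "(int \<Rightarrow> real) \<Rightarrow> nat \<Rightarrow> real poly \<Rightarrow> real poly" where
  "quad_poly W M p = (\<Sum>j\<le>M. smult (W (int j)) ((pderiv ^^ j) p * (pderiv ^^ (M - j)) p))"

lemma act_quad_jet: "act (quad_jet W M) (poly p) = poly (quad_poly W M p)"
  unfolding act_def
  by (rule ext) (simp add: quad_jet_def quad_poly_def higher_deriv_poly poly_sum mult.assoc)

lemma pderiv_quad_poly:
  assumes "W (-1) = 0" and "W (int M + 1) = 0"
  shows "pderiv (quad_poly W M p) = quad_poly (\<lambda>i. W i + W (i - 1)) (Suc M) p"
proof -
  define D where "D j = (pderiv ^^ j) p" for j
  have pderiv_D: "pderiv (D j) = D (Suc j)" for j
    by (simp add: D_def)
  have "pderiv (quad_poly W M p)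
      = (\<Sum>j\<le>M. smult (W (int j)) (D j * D (Suc (M - j))))
        + (\<Sum>j\<le>M. smult (W (int j)) (D (Suc j) * D (M - j)))"
    unfolding quad_poly_def D_def[symmetric]
    by (simp add: higher_pderiv_sum[where n=1, simplified] pderiv_smult pderiv_mult pderiv_D
        sum.distrib[symmetric] smult_add_right algebra_simps)
  also have "(\<Sum>j\<le>M. smult (W (int j)) (D j * D (Suc (M - j))))
      = (\<Sum>j\<le>Suc M. smult (W (int j)) (D j * D (Suc M - j)))"
    using assms(2) by (simp add: Suc_diff_le add.commute)
  also have "(\<Sum>j\<le>M. smult (W (int j)) (D (Suc j) * D (M - j)))
      = (\<Sum>j\<le>Suc M. smult (W (int j - 1)) (D j * D (Suc M - j)))"
    using assms(1) by (simp add: sum.atMost_Suc_shift del: sum.atMost_Suc)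
  finally show ?thesis
    by (simp add: quad_poly_def D_def sum.distrib[symmetric] smult_add_left)
qed

primrec binom_smooth :: "nat \<Rightarrow> (int \<Rightarrow> real) \<Rightarrow> int \<Rightarrow> real" where
  "binom_smooth 0 W i = W i"
| "binom_smooth (Suc e) W i = binom_smooth e W i + binom_smooth e W (i - 1)"

lemma binom_smooth_eq_0:
  assumes "\<And>i. i < lo \<or> hi < i \<Longrightarrow> W i = 0"
  shows "i < lo \<or> hi + int e < i \<Longrightarrow> binom_smooth e W i = 0"
  by (induction e arbitrary: i) (use assms in auto)

lemma binom_smooth_alternating:
  assumes "\<And>i. lo \<le> i \<Longrightarrow> i \<le> hi \<Longrightarrow> W i = (-1) powi i * g (of_int i)"
  shows "lo + int e \<le> i \<Longrightarrow> i \<le> hi \<Longrightarrow> binom_smooth e W i = (-1) powi i * bdiff e g (of_int i)"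
proof (induction e arbitrary: i)
  case (Suc e)
  then show ?case
    by (simp add: power_int_diff algebra_simps)
qed (use assms in simp)

lemma higher_pderiv_quad_poly:
  assumes "\<And>i. i < 0 \<or> int M < i \<Longrightarrow> W i = 0"
  shows "(pderiv ^^ e) (quad_poly W M p) = quad_poly (binom_smooth e W) (M + e) p"
proof (induction e)
  case 0
  have "binom_smooth 0 W = W"
    by (rule ext) simp
  then show ?case by simp
next
  case (Suc e)
  have "binom_smooth e W (-1) = 0" and "binom_smooth e W (int (M + e) + 1) = 0"
    using binom_smooth_eq_0[OF assms] by auto
  moreover have "(\<lambda>i. binom_smooth e W i + binom_smooth e W (i - 1)) = binom_smooth (Suc e) W"
    by (rule ext) simp
  ultimately show ?case
    using Suc pderiv_quad_poly[of "binom_smooth e W" "M + e" p] by simp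
qed

lemma quad_poly_eq_0_if_antisymmetric:
  fixes p :: "real poly"
  assumes "degree p \<le> n"
    and "\<And>j. j \<le> M \<Longrightarrow> j \<le> n \<Longrightarrow> M - j \<le> n \<Longrightarrow> W (int j) + W (int (M - j)) = 0"
  shows "quad_poly W M p = 0"
proof -
  define D where "D j = (pderiv ^^ j) p" for j
  have D_eq_0: "n < j \<Longrightarrow> D j = 0" for j
    using assms(1) by (simp add: D_def higher_pderiv_eq_0_iff)
  have "quad_poly W M p = (\<Sum>j\<le>M. smult (W (int (M - j))) (D (M - j) * D (M - (M - j))))"
    unfolding quad_poly_def D_def
    by (rule sum.reindex_bij_witness[where i="\<lambda>j. M - j" and j="\<lambda>j. M - j"]) auto
  also have "\<dots> = (\<Sum>j\<le>M. smult (W (int (M - j))) (D j * D (M - j)))"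
    by (intro sum.cong) (auto simp: mult.commute)
  finally have reflected: "quad_poly W M p = (\<Sum>j\<le>M. smult (W (int (M - j))) (D j * D (M - j)))" .
  have "quad_poly W M p + quad_poly W M p
      = (\<Sum>j\<le>M. smult (W (int j) + W (int (M - j))) (D j * D (M - j)))"
    by (subst (2) reflected) (simp add: quad_poly_def D_def sum.distrib[symmetric] smult_add_left)
  also have "\<dots> = 0"
  proof (intro sum.neutral ballI)
    fix j assume "j \<in> {..M}"
    then show "smult (W (int j) + W (int (M - j))) (D j * D (M - j)) = 0"
      using assms(2)[of j] D_eq_0[of j] D_eq_0[of "M - j"] by (cases "j \<le> n \<and> M - j \<le> n") auto
  qed
  finally show ?thesis by simp
qed

lemma quad_poly_monom: "quad_poly W (2 * m) (monom 1 m) = [:W (int m) * fact m ^ 2:]"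
proof -
  define D where "D j = (pderiv ^^ j) (monom (1::real) m)" for j
  have D_eq_0: "m < j \<Longrightarrow> D j = 0" for j
    by (simp add: D_def higher_pderiv_eq_0_iff degree_monom_eq)
  have D_m: "D m = [:fact m:]"
    by (auto intro!: poly_eqI simp: D_def coeff_higher_pderiv coeff_monom pochhammer_fact
        coeff_pCons split: nat.split)
  have "quad_poly W (2 * m) (monom 1 m)
      = (\<Sum>j\<le>2 * m. if j = m then smult (W (int m)) (D m * D m) else 0)"
    unfolding quad_poly_def D_def[symmetric]
  proof (intro sum.cong refl)
    fix j assume "j \<in> {..2 * m}"
    then have "j = m \<or> m < j \<or> m < 2 * m - j"
      by auto
    then show "smult (W (int j)) (D j * D (2 * m - j))
        = (if j = m then smult (W (int m)) (D m * D m) else 0)"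
      using D_eq_0 by (auto simp: mult_2)
  qed
  then show ?thesis
    by (simp add: D_m power2_eq_square)
qed

section \<open>Involved jet variables and linear independence\<close>

lemma sum_apply: "sum F A x = (\<Sum>a\<in>A. F a x)"
  by (induction A rule: infinite_finite_induct) auto

interpretation opscale: vector_space opscale
  by unfold_locales (auto simp: opscale_def fun_eq_iff algebra_simps)

lemma not_involves_sum: "(\<And>x. x \<in> A \<Longrightarrow> \<not> involves (F x) j) \<Longrightarrow> \<not> involves (sum F A) j"
  unfolding involves_def sum_apply by (auto intro!: sum.cong)

lemma involves_opscale_add:
  "involves T j \<Longrightarrow> \<not> involves S j \<Longrightarrow> c \<noteq> 0 \<Longrightarrow> involves (opscale c T + S) j"
  unfolding involves_def opscale_def by auto

lemma inj_on_if_triangular_involvement: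
  fixes T :: "'a::linorder \<Rightarrow> jetop"
  assumes "\<And>r. r \<in> R \<Longrightarrow> involves (T r) (v r)"
    and "\<And>r r'. r \<in> R \<Longrightarrow> r' \<in> R \<Longrightarrow> r' < r \<Longrightarrow> \<not> involves (T r') (v r)"
  shows "inj_on T R"
proof (rule inj_onI)
  fix r r' assume "r \<in> R" "r' \<in> R" "T r = T r'"
  then show "r = r'"
    using assms by (metis linorder_neqE)
qed

lemma involves_combination:
  assumes "finite R" and "m \<in> R" and "c m \<noteq> 0" and "involves (T m) j"
    and "\<And>r. r \<in> R \<Longrightarrow> r \<noteq> m \<Longrightarrow> c r \<noteq> 0 \<Longrightarrow> \<not> involves (T r) j"
  shows "involves (\<Sum>r\<in>R. opscale (c r) (T r)) j"
proof -
  have "\<not> involves (\<Sum>r\<in>R - {m}. opscale (c r) (T r)) j"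
  proof (rule not_involves_sum)
    fix r assume "r \<in> R - {m}"
    then show "\<not> involves (opscale (c r) (T r)) j"
      using assms(5)[of r] by (cases "c r = 0") (auto simp: involves_def opscale_def)
  qed
  then show ?thesis
    using involves_opscale_add[OF assms(4) _ assms(3)] assms(1,2) by (simp add: sum.remove)
qed

lemma independent_if_triangular_involvement:
  fixes T :: "'a::linorder \<Rightarrow> jetop"
  assumes "finite R"
    and involves: "\<And>r. r \<in> R \<Longrightarrow> involves (T r) (v r)"
    and lower: "\<And>r r'. r \<in> R \<Longrightarrow> r' \<in> R \<Longrightarrow> r' < r \<Longrightarrow> \<not> involves (T r') (v r)"
  shows "\<not> opdependent (T ` R)"
proof
  assume "opdependent (T ` R)"
  then obtain c where nontrivial: "\<exists>x\<in>T ` R. c x \<noteq> 0" and "(\<Sum>x\<in>T ` R. opscale (c x) x) = 0"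
    unfolding opscale.dependent_finite[OF finite_imageI[OF assms(1)]] by auto
  moreover have "inj_on T R"
    using involves lower by (rule inj_on_if_triangular_involvement)
  ultimately have combination: "(\<Sum>r\<in>R. opscale (c (T r)) (T r)) = 0"
    by (simp add: sum.reindex)
  define R' where "R' = {r \<in> R. c (T r) \<noteq> 0}"
  define m where "m = Max R'"
  have "finite R'" "R' \<noteq> {}"
    using assms(1) nontrivial by (auto simp: R'_def)
  then have m: "m \<in> R" "c (T m) \<noteq> 0" and m_max: "\<And>r. r \<in> R' \<Longrightarrow> r \<le> m"
    using Max_in[of R'] by (auto simp: m_def R'_def)
  have "involves (\<Sum>r\<in>R. opscale (c (T r)) (T r)) (v m)"
  proof (rule involves_combination[where c="\<lambda>r. c (T r)" and T=T, OF assms(1) m involves[OF m(1)]])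
    fix r assume "r \<in> R" "r \<noteq> m" "c (T r) \<noteq> 0"
    then show "\<not> involves (T r) (v m)"
      using m_max[of r] by (intro lower m(1)) (auto simp: R'_def)
  qed
  then show False
    by (simp add: combination involves_def)
qed

lemma opspan_eq_if_independent_card_ge:
  assumes "B \<subseteq> opspan G" and "\<not> opdependent B" and "finite G" and "card G \<le> card B"
  shows "opspan B = opspan G"
proof
  show "opspan B \<subseteq> opspan G"
    using assms(1) by (simp add: opscale.span_minimal opscale.subspace_span)
  have "finite B"
    using opscale.independent_span_bound[OF assms(3,2,1)] by simp
  show "opspan G \<subseteq> opspan B"
  proof (rule ccontr)
    assume "\<not> opspan G \<subseteq> opspan B"
    then obtain g where "g \<in> G" "g \<notin> opspan B"
      by (meson opscale.span_minimal opscale.subspace_span subsetI)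
    then have "\<not> opdependent (insert g B)" and "g \<notin> B"
      using assms(2) opscale.span_base by (auto simp: opscale.independent_insert)
    moreover have "insert g B \<subseteq> opspan G"
      using \<open>g \<in> G\<close> assms(1) opscale.span_base by blast
    ultimately have "card (insert g B) \<le> card G"
      using opscale.independent_span_bound[OF assms(3)] by simp
    then show False
      using \<open>finite B\<close> \<open>g \<notin> B\<close> assms(4) by simp
  qed
qed

lemma quad_jet_in_opspan:
  assumes "\<And>j. j \<le> M \<Longrightarrow> W (int j) \<noteq> 0 \<Longrightarrow> (\<lambda>u. u j * u (M - j)) \<in> S"
  shows "quad_jet W M \<in> opspan S"
proof -
  have "quad_jet W M = (\<Sum>j\<le>M. opscale (W (int j)) (\<lambda>u. u j * u (M - j)))"
    by (rule ext) (simp add: quad_jet_def sum_apply opscale_def mult.assoc)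
  also have "\<dots> \<in> opspan S"
  proof (intro opscale.span_sum)
    fix j assume "j \<in> {..M}"
    show "opscale (W (int j)) (\<lambda>u. u j * u (M - j)) \<in> opspan S"
    proof (cases "W (int j) = 0")
      case True
      then show ?thesis
        using opscale.span_zero by (simp add: opscale_def zero_fun_def)
    next
      case False
      then show ?thesis
        using assms \<open>j \<in> {..M}\<close> by (intro opscale.span_scale opscale.span_base) auto
    qed
  qed
  finally show ?thesis .
qed

lemma not_involves_quad_jet:
  assumes "\<And>i. i \<le> M \<Longrightarrow> W (int i) \<noteq> 0 \<Longrightarrow> i \<noteq> j \<and> M - i \<noteq> j"
  shows "\<not> involves (quad_jet W M) j"
proof -
  have "quad_jet W M (u(j := c)) = quad_jet W M u" for u c
    unfolding quad_jet_def
  proof (intro sum.cong refl)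
    fix i assume "i \<in> {..M}"
    then show "W (int i) * (u(j := c)) i * (u(j := c)) (M - i) = W (int i) * u i * u (M - i)"
      using assms[of i] by (cases "W (int i) = 0") auto
  qed
  then show ?thesis
    by (simp add: involves_def)
qed

lemma involves_quad_jet:
  assumes "M < 2 * r" and "r \<le> M" and "W (int r) + W (int (M - r)) \<noteq> 0"
  shows "involves (quad_jet W M) r"
proof -
  define u :: "nat \<Rightarrow> real" where "u i = (if i = M - r then 1 else 0)" for i
  have "u j * u (M - j) = 0" if "j \<le> M" for j
    using that assms(1,2) by (auto simp: u_def)
  then have "quad_jet W M u = 0"
    unfolding quad_jet_def by (intro sum.neutral) (simp add: mult.assoc)
  moreover have "quad_jet W M (u(r := 1)) = W (int r) + W (int (M - r))"
  proof -
    have "(u(r := 1)) j * (u(r := 1)) (M - j) = (if j \<in> {r, M - r} then 1 else 0)" if "j \<le> M" for j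
      using that assms(1,2) by (auto simp: u_def)
    then have "quad_jet W M (u(r := 1)) = (\<Sum>j\<le>M. if j \<in> {r, M - r} then W (int j) else 0)"
      unfolding quad_jet_def by (intro sum.cong) (auto simp: mult.assoc)
    also have "\<dots> = (\<Sum>j\<in>{j\<in>{..M}. j \<in> {r, M - r}}. W (int j))"
      by (simp only: sum.inter_filter[OF finite_atMost])
    also have "\<dots> = (\<Sum>j\<in>{r, M - r}. W (int j))"
      using assms(2) by (intro sum.cong) auto
    also have "\<dots> = W (int r) + W (int (M - r))"
      using assms(1) by simp
    finally show ?thesis .
  qed
  ultimately show ?thesis
    using assms(3) unfolding involves_def by (metis fun_upd_triv)
qed

lemma involves_quad_jet_centre:
  assumes "M = 2 * r" and "W (int r) \<noteq> 0"
  shows "involves (quad_jet W M) r"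
proof -
  have "quad_jet W M ((\<lambda>_. 0)(r := 1)) = (\<Sum>j\<le>M. if j = r then W (int j) else 0)"
    unfolding quad_jet_def using assms(1) by (intro sum.cong) auto
  also have "\<dots> = W (int r)"
    using assms(1) by simp
  finally have "quad_jet W M ((\<lambda>_. 0)(r := 1)) \<noteq> quad_jet W M (\<lambda>_. 0)"
    using assms(2) by (simp add: quad_jet_def)
  then show ?thesis
    unfolding involves_def by blast
qed

section \<open>The operators Q_{k,r}\<close>

(* In the parameters n = a + L + s, k = a - s, r = a + L the sum defining Q_{k,r} runs over
   a <= i <= a + L, with coefficient (-1)^i P(i - a) for P = weight_poly s L. *)
definition Qweight :: "nat \<Rightarrow> nat \<Rightarrow> nat \<Rightarrow> int \<Rightarrow> real" where
  "Qweight a L s i =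
     (if int a \<le> i \<and> i \<le> int (a + L)
      then (-1) powi i * poly (weight_poly s L) (of_int i - real a) else 0)"

lemma Qkr_eq_quad_jet:
  "Qkr (a + L + s) (int a - int s) (int (a + L)) = quad_jet (Qweight a L s) (2 * a + L)"
proof (rule ext)
  fix u :: "nat \<Rightarrow> real"
  have "nat (int (a + L + s) - int (a + L) + 1) = Suc s"
    and "nat (int (a + L + s) - int (a + L)) = s"
    by simp_all
  then have "Qkr (a + L + s) (int a - int s) (int (a + L)) u
      = (\<Sum>i\<in>{int a..int (a + L)}. Qweight a L s i * u (nat i) * u (nat (int (2 * a + L) - i)))"
    unfolding Qkr_def by (intro sum.cong) (simp_all add: Qweight_def poly_weight_poly algebra_simps)
  also have "\<dots> = (\<Sum>j\<in>{a..a + L}. Qweight a L s (int j) * u j * u (2 * a + L - j))"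
    by (rule sum.reindex_bij_witness[where i=int and j=nat])
      (auto simp: nat_diff_distrib nat_add_distrib nat_mult_distrib)
  also have "\<dots> = quad_jet (Qweight a L s) (2 * a + L) u"
    unfolding quad_jet_def by (rule sum.mono_neutral_left) (auto simp: Qweight_def)
  finally show "Qkr (a + L + s) (int a - int s) (int (a + L)) u
      = quad_jet (Qweight a L s) (2 * a + L) u" .
qed

lemma Qweight_window:
  assumes "int a - int s - 1 \<le> i" and "i \<le> int (a + L + s)"
  shows "Qweight a L s i = (-1) powi i * poly (weight_poly s L) (of_int i - real a)"
  \<comment> \<open>the zeros of P at -s-1, ..., -1 and L+1, ..., L+s hide the truncation\<close>
proof (cases "int a \<le> i \<and> i \<le> int (a + L)")
  case False
  then consider "i < int a" | "int (a + L) < i"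
    by linarith
  then have "poly (weight_poly s L) (of_int i - real a) = 0"
  proof cases
    case 1
    then have "(of_int i - real a + real s + 1 gchoose Suc s) = 0"
      using assms gbinomial_of_nat_eq_0[of "nat (i - int a + int s + 1)" "Suc s"] by simp
    then show ?thesis
      by (simp add: poly_weight_poly)
  next
    case 2
    then have "(real L + real s - (of_int i - real a) gchoose s) = 0"
      using assms gbinomial_of_nat_eq_0[of "nat (int (a + L + s) - i)" s] by (simp add: algebra_simps)
    then show ?thesis
      by (simp add: poly_weight_poly)
  qed
  then show ?thesis
    using False by (simp add: Qweight_def)
qed (simp add: Qweight_def)

lemma binom_smooth_Qweight:
  assumes "int a + int e \<le> int j + int s + 1" and "j \<le> a + L + s"
  shows "binom_smooth e (Qweight a L s) (int j)
      = (-1) ^ j * bdiff e (poly (weight_poly s L)) (real j - real a)"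
proof -
  have "binom_smooth e (Qweight a L s) (int j)
      = (-1) powi int j * bdiff e (\<lambda>y. poly (weight_poly s L) (y + - real a)) (of_int (int j))"
    using assms by (intro binom_smooth_alternating[where lo="int a - int s - 1" and hi="int (a + L + s)"])
      (auto simp: Qweight_window)
  then show ?thesis
    using bdiff_shift[of e "poly (weight_poly s L)" "- real a" "real j"] by simp
qed

lemma neg_one_power_diff_odd:
  assumes "odd M" and "j \<le> M"
  shows "(-1::real) ^ (M - j) = - ((-1) ^ j)"
  using assms by (auto simp: minus_one_power_iff)

lemma higher_pderiv_quad_poly_Qweight:
  "(pderiv ^^ e) (quad_poly (Qweight a L s) (2 * a + L) p)
     = quad_poly (binom_smooth e (Qweight a L s)) (2 * a + L + e) p"
  by (rule higher_pderiv_quad_poly) (auto simp: Qweight_def)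

lemma degree_quad_poly_Qweight_le:
  assumes "degree p \<le> a + L + s"
  shows "degree (quad_poly (Qweight a L s) (2 * a + L) p) \<le> 2 * s + L mod 2"
proof -
  define e where "e = Suc (2 * s + L mod 2)"
  define M where "M = 2 * a + L + e"
  define D where "D x = bdiff e (poly (weight_poly s L)) x" for x
  have "quad_poly (binom_smooth e (Qweight a L s)) M p = 0"
  proof (rule quad_poly_eq_0_if_antisymmetric[OF assms])
    fix j assume j: "j \<le> M" "j \<le> a + L + s" "M - j \<le> a + L + s"
    have smooth_j: "binom_smooth e (Qweight a L s) (int j) = (-1) ^ j * D (real j - real a)"
      and smooth_j': "binom_smooth e (Qweight a L s) (int (M - j))
        = (-1) ^ (M - j) * D (real (M - j) - real a)"
      unfolding D_def by (rule binom_smooth_Qweight; use j in \<open>simp add: M_def e_def\<close>)+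
    show "binom_smooth e (Qweight a L s) (int j) + binom_smooth e (Qweight a L s) (int (M - j)) = 0"
    proof (cases "even L")
      case True
      then have "e = Suc (2 * s)" and "odd M"
        by (auto simp: e_def M_def)
      then show ?thesis
        unfolding smooth_j smooth_j' D_def
        by (simp add: bdiff_weight_poly_top neg_one_power_diff_odd[OF \<open>odd M\<close> j(1)] del: bdiff.simps)
    next
      case False
      then have "e = Suc (Suc (2 * s))"
        by (simp add: e_def odd_iff_mod_2_eq_one)
      then show ?thesis
        unfolding smooth_j smooth_j' D_def by (simp add: bdiff_weight_poly_above del: bdiff.simps)
    qed
  qed
  then have "(pderiv ^^ e) (quad_poly (Qweight a L s) (2 * a + L) p) = 0"
    by (simp add: higher_pderiv_quad_poly_Qweight M_def)
  then show ?thesis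
    unfolding higher_pderiv_eq_0_iff e_def by auto
qed

lemma higher_pderiv_quad_poly_Qweight_monom:
  fixes a L s :: nat
  defines "d \<equiv> 2 * s + L mod 2" and "m \<equiv> a + s + (L + L mod 2) div 2"
  shows "(pderiv ^^ d) (quad_poly (Qweight a L s) (2 * a + L) (monom 1 m)) \<noteq> 0"
proof -
  have M: "2 * a + L + d = 2 * m"
    unfolding d_def m_def by presburger
  have "bdiff d (poly (weight_poly s L)) (real m - real a) \<noteq> 0"
  proof (cases "even L")
    case True
    then have "d = 2 * s" and "real m - real a = real L / 2 + real s"
      by (auto simp: d_def m_def real_of_nat_div)
    then show ?thesis
      using bdiff_weight_poly_centre[OF True] by simp
  next
    case False
    then have "d = Suc (2 * s)"
      by (simp add: d_def odd_iff_mod_2_eq_one)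
    then show ?thesis
      using weight_poly_nonzero by (simp add: bdiff_weight_poly_top del: bdiff.simps)
  qed
  moreover have "binom_smooth d (Qweight a L s) (int m)
      = (-1) ^ m * bdiff d (poly (weight_poly s L)) (real m - real a)"
    by (rule binom_smooth_Qweight) (auto simp: d_def m_def)
  ultimately show ?thesis
    by (simp add: higher_pderiv_quad_poly_Qweight M quad_poly_monom)
qed

theorem has_deficiency_Qkr:
  "has_deficiency (a + L + s) (Qkr (a + L + s) (int a - int s) (int (a + L)))
     (int a - int s + int L - int (L mod 2))"
proof -
  define m where "m = a + s + (L + L mod 2) div 2"
  define R where "R = quad_poly (Qweight a L s) (2 * a + L) (monom 1 m)"
  have "(pderiv ^^ (2 * s + L mod 2)) R \<noteq> 0"
    unfolding R_def m_def by (rule higher_pderiv_quad_poly_Qweight_monom)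
  then have "R \<noteq> 0" and "2 * s + L mod 2 \<le> degree R"
    by (auto simp: higher_pderiv_eq_0_iff)
  moreover have "degree (monom (1::real) m) \<le> a + L + s"
    by (auto simp: m_def degree_monom_eq)
  moreover have "act (Qkr (a + L + s) (int a - int s) (int (a + L))) (poly p)
      = poly (quad_poly (Qweight a L s) (2 * a + L) p)" for p
    by (simp only: Qkr_eq_quad_jet act_quad_jet)
  ultimately have "has_deficiency (a + L + s) (Qkr (a + L + s) (int a - int s) (int (a + L)))
      (int (a + L + s) - int (2 * s + L mod 2))"
    unfolding R_def
    by (intro has_deficiencyI[where F="quad_poly (Qweight a L s) (2 * a + L)"])
      (auto intro: degree_quad_poly_Qweight_le)
  then show ?thesis
    by (simp add: algebra_simps)
qed

definition Qmonomials :: "nat \<Rightarrow> int \<Rightarrow> jetop set" where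
  "Qmonomials n k = {(\<lambda>u. u i * u j) | i j. i \<le> n \<and> j \<le> n \<and> int i + int j = int n + k}"

lemma Qspace_eq_opspan_Qmonomials: "Qspace n k = opspan (Qmonomials n k)"
  by (simp add: Qspace_def Qmonomials_def)

lemma Qkr_in_Qspace:
  "Qkr (a + L + s) (int a - int s) (int (a + L)) \<in> Qspace (a + L + s) (int a - int s)"
  unfolding Qspace_eq_opspan_Qmonomials Qkr_eq_quad_jet
proof (rule quad_jet_in_opspan)
  fix j assume "j \<le> 2 * a + L" "Qweight a L s (int j) \<noteq> 0"
  then have "a \<le> j" "j \<le> a + L"
    by (auto simp: Qweight_def split: if_splits)
  then show "(\<lambda>u. u j * u (2 * a + L - j)) \<in> Qmonomials (a + L + s) (int a - int s)"
    unfolding Qmonomials_def by (intro CollectI exI[of _ j] exI[of _ "2 * a + L - j"]) auto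
qed

lemma Qweight_lower_end: "Qweight a L s (int a) = (-1) ^ a * real ((L + s) choose s)"
  using binomial_gbinomial[of "Suc s" "Suc s", where 'a=real]
    binomial_gbinomial[of "L + s" s, where 'a=real]
  unfolding Qweight_def power_int_of_nat by (simp add: poly_weight_poly add_ac)

lemma Qweight_upper_end:
  "Qweight a L s (int (a + L)) = (-1) ^ (a + L) * real ((L + s + 1) choose (s + 1))"
  using binomial_gbinomial[of "L + s + 1" "Suc s", where 'a=real]
    binomial_gbinomial[of s s, where 'a=real]
  unfolding Qweight_def power_int_of_nat by (simp add: poly_weight_poly add_ac)

lemma involves_Qkr: "involves (Qkr (a + L + s) (int a - int s) (int (a + L))) (a + L)"
  unfolding Qkr_eq_quad_jet
proof (cases "L = 0")
  case True
  then show "involves (quad_jet (Qweight a L s) (2 * a + L)) (a + L)"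
    by (intro involves_quad_jet_centre) (simp_all add: Qweight_lower_end)
next
  case False
  have "0 < (L + s) choose s"
    by (simp add: zero_less_binomial)
  moreover have "(L + s) choose s < (L + s + 1) choose (s + 1)"
    using False zero_less_binomial[of "s + 1" "L + s"] by simp
  ultimately have "real ((L + s) choose s) + (-1) ^ L * real ((L + s + 1) choose (s + 1)) \<noteq> 0"
    by (cases "even L") (auto simp del: binomial_Suc_Suc)
  then have "(-1) ^ a * (real ((L + s) choose s) + (-1) ^ L * real ((L + s + 1) choose (s + 1))) \<noteq> 0"
    by simp
  then have "Qweight a L s (int (a + L)) + Qweight a L s (int (2 * a + L - (a + L))) \<noteq> 0"
    unfolding Qweight_upper_end
    by (simp add: Qweight_lower_end power_add algebra_simps del: binomial_Suc_Suc)
  then show "involves (quad_jet (Qweight a L s) (2 * a + L)) (a + L)"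
    using False by (intro involves_quad_jet) auto
qed

lemma not_involves_Qkr: "a + L < j \<Longrightarrow> \<not> involves (Qkr (a + L + s) (int a - int s) (int (a + L))) j"
  unfolding Qkr_eq_quad_jet by (rule not_involves_quad_jet) (auto simp: Qweight_def split: if_splits)

lemma rmin_eq: "rmin n k = (int n + k + 1) div 2"
proof -
  have "\<lceil>real_of_int (int n + k) / 2\<rceil> = - \<lfloor>real_of_int (- (int n + k)) / real_of_int 2\<rfloor>"
    by (simp add: ceiling_def minus_divide_left)
  also have "\<dots> = - ((- (int n + k)) div 2)"
    by (simp only: floor_divide_of_int_eq)
  also have "\<dots> = (int n + k + 1) div 2"
    by presburger
  finally show ?thesis
    by (simp add: rmin_def)
qed

lemma Qkr_parameters:
  assumes "- int n \<le> k" and "r \<in> {rmin n k .. rmax n k}"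
  obtains a L s where "n = a + L + s" and "k = int a - int s" and "r = int (a + L)"
proof -
  have "int n + k \<le> 2 * r" and "r \<le> int n" and "r \<le> int n + k"
    using assms by (auto simp: rmin_eq rmax_def)
  then show ?thesis
    by (intro that[of "nat (k + int n - r)" "nat (2 * r - int n - k)" "nat (int n - r)"]) auto
qed

lemma Qkr_properties:
  assumes "- int n \<le> k" and "r \<in> {rmin n k .. rmax n k}"
  shows "Qkr n k r \<noteq> (\<lambda>u. 0) \<and> Qkr n k r \<in> Qspace n k
          \<and> involves (Qkr n k r) (nat r) \<and> (\<forall>j. int j > r \<longrightarrow> \<not> involves (Qkr n k r) j)
          \<and> has_deficiency n (Qkr n k r) (k + 2 * (r - rmin n k))"
proof -
  obtain a L s where params: "n = a + L + s" "k = int a - int s" "r = int (a + L)"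
    using Qkr_parameters[OF assms] .
  have "involves (Qkr n k r) (nat r)"
    unfolding params nat_int by (rule involves_Qkr)
  moreover have "\<not> involves (Qkr n k r) j" if "r < int j" for j
    using that unfolding params by (intro not_involves_Qkr) simp
  moreover have "Qkr n k r \<in> Qspace n k"
    unfolding params by (rule Qkr_in_Qspace)
  moreover have "k + 2 * (r - rmin n k) = int a - int s + int L - int (L mod 2)"
    unfolding params rmin_eq by presburger
  then have "has_deficiency n (Qkr n k r) (k + 2 * (r - rmin n k))"
    unfolding params by (simp only: has_deficiency_Qkr)
  ultimately show ?thesis
    by (auto simp: involves_def)
qed

lemma Qmonomials_subset:
  "Qmonomials n k \<subseteq> (\<lambda>r u. u (nat r) * u (nat (int n + k - r))) ` {rmin n k .. rmax n k}"
proof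
  fix g assume "g \<in> Qmonomials n k"
  then obtain i j where ij: "g = (\<lambda>u. u i * u j)" "i \<le> n" "j \<le> n" "int i + int j = int n + k"
    unfolding Qmonomials_def by blast
  define r where "r = int (max i j)"
  have "nat r = max i j" and "nat (int n + k - r) = min i j"
    using ij by (auto simp: r_def)
  then have "g = (\<lambda>u. u (nat r) * u (nat (int n + k - r)))"
    using ij(1) by (auto simp: max_def min_def mult.commute)
  moreover have "r \<in> {rmin n k .. rmax n k}"
    using ij by (auto simp: r_def rmin_eq rmax_def)
  ultimately show "g \<in> (\<lambda>r u. u (nat r) * u (nat (int n + k - r))) ` {rmin n k .. rmax n k}"
    by blast
qed

lemma Qkr_triangular:
  assumes "- int n \<le> k" and "r \<in> {rmin n k .. rmax n k}" and "r' \<in> {rmin n k .. rmax n k}" and "r' < r"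
  shows "\<not> involves (Qkr n k r') (nat r)"
proof -
  have "0 \<le> rmin n k"
    using assms(1) by (simp add: rmin_eq)
  then have "0 \<le> r"
    using assms(2) by simp
  then show ?thesis
    using Qkr_properties[OF assms(1,3)] assms(4) by simp
qed

lemma inj_on_Qkr:
  assumes "- int n \<le> k"
  shows "inj_on (Qkr n k) {rmin n k .. rmax n k}"
  using _ Qkr_triangular[OF assms] by (rule inj_on_if_triangular_involvement) (use Qkr_properties[OF assms] in blast)

lemma independent_Qkr:
  assumes "- int n \<le> k"
  shows "\<not> opdependent (Qkr n k ` {rmin n k .. rmax n k})"
  using finite_atLeastAtMost_int _ Qkr_triangular[OF assms]
  by (rule independent_if_triangular_involvement) (use Qkr_properties[OF assms] in blast)

lemma opspan_Qkr_eq_Qspace: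
  assumes "- int n \<le> k"
  shows "opspan (Qkr n k ` {rmin n k .. rmax n k}) = Qspace n k"
  unfolding Qspace_eq_opspan_Qmonomials
proof (rule opspan_eq_if_independent_card_ge[OF _ independent_Qkr[OF assms]])
  show "Qkr n k ` {rmin n k .. rmax n k} \<subseteq> opspan (Qmonomials n k)"
    using Qkr_properties[OF assms] by (auto simp: Qspace_eq_opspan_Qmonomials)
  show "finite (Qmonomials n k)"
    using Qmonomials_subset by (rule finite_subset) simp
  have "card (Qmonomials n k) \<le> card {rmin n k .. rmax n k}"
    using card_mono[OF _ Qmonomials_subset] card_image_le[OF finite_atLeastAtMost_int] le_trans
    by blast
  then show "card (Qmonomials n k) \<le> card (Qkr n k ` {rmin n k .. rmax n k})"
    by (simp add: card_image[OF inj_on_Qkr[OF assms]])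
qed

theorem mainTheorem1:
  fixes n :: nat and k :: int
  assumes "n \<ge> 1" and "- int n \<le> k" and "k \<le> int n"
  shows "(\<forall>r. rmin n k \<le> r \<and> r \<le> rmax n k \<longrightarrow>
            Qkr n k r \<noteq> (\<lambda>u. 0) \<and> Qkr n k r \<in> Qspace n k
          \<and> involves (Qkr n k r) (nat r) \<and> (\<forall>j. int j > r \<longrightarrow> \<not> involves (Qkr n k r) j)
          \<and> has_deficiency n (Qkr n k r) (k + 2 * (r - rmin n k)))
       \<and> inj_on (Qkr n k) {rmin n k .. rmax n k}
       \<and> \<not> opdependent (Qkr n k ` {rmin n k .. rmax n k})
       \<and> opspan (Qkr n k ` {rmin n k .. rmax n k}) = Qspace n k"
proof -
  \<comment> \<open>only - n \<le> k is needed: for k > n the index range is empty and Q_k = {0}\<close>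
  show ?thesis
    using Qkr_properties[OF assms(2)] inj_on_Qkr[OF assms(2)] independent_Qkr[OF assms(2)]
      opspan_Qkr_eq_Qspace[OF assms(2)]
    by auto
qed

end
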